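(* Let $G$ be a finite group with $d(G) \geq 2$, and let $1 \leq k \leq d(G)$. Assume that $G$ is $k$-flexible. Let $N$ be a normal subgroup of $G$ such that $d(G/N) = d(G)$. Then $G/N$ is $k$-flexible.
   Context: For a finite group $H$, $d(H)$ denotes the minimal size of a generating set of $H$. For an integer $1 \leq k \leq d(G)$, a finite group $G$ is called $k$-flexible if for any $x_1,\dots,x_k \in G$ with $d(\langle x_1,\dots,x_k\rangle)=k$ there exist $x_{k+1},\dots,x_{d(G)} \in G$ such that $\langle x_1,\dots,x_{d(G)}\rangle = G$. *)

theory Defs
  imports "HOL-Algebra.Algebra"
begin

definition min_gens :: "('a, 'b) monoid_scheme \<Rightarrow> 'a set \<Rightarrow> nat" where
  "min_gens G H = (LEAST n. \<exists>S. S \<subseteq> H \<and> finite S \<and> card S = n \<and> generate G S = H)"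

definition rank_grp :: "('a, 'b) monoid_scheme \<Rightarrow> nat" where
  "rank_grp G = min_gens G (carrier G)"

text \<open>k-flexible: for any x_1..x_k (indexed 0..k-1) in G with d(<x_1..x_k>) = k
  there are x_(k+1)..x_(d(G)) (indexed k..d(G)-1) with <x_1..x_d(G)> = G.\<close>
definition k_flexible :: "('a, 'b) monoid_scheme \<Rightarrow> nat \<Rightarrow> bool" where
  "k_flexible G k \<longleftrightarrow>
     (\<forall>x :: nat \<Rightarrow> 'a. x ` {..<k} \<subseteq> carrier G \<longrightarrow>
        min_gens G (generate G (x ` {..<k})) = k \<longrightarrow>
        (\<exists>y :: nat \<Rightarrow> 'a. y ` {k..<rank_grp G} \<subseteq> carrier G \<and>
           generate G (x ` {..<k} \<union> y ` {k..<rank_grp G}) = carrier G))"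

end

theory Submission
  imports Defs
begin

text \<open>Let \<open>h : G \<rightarrow> H\<close> be surjective with \<open>d(H) = d(G)\<close>, e.g. \<open>G \<rightarrow> G/N\<close>. Lift \<open>x\<^sub>1, \<dots>, x\<^sub>k\<close> with
  \<open>d(\<langle>x\<^sub>1, \<dots>, x\<^sub>k\<rangle>) = k\<close> to \<open>x'\<^sub>1, \<dots>, x'\<^sub>k\<close> in \<open>G\<close>. A homomorphism maps a generating set of
  \<open>\<langle>x'\<^sub>1, \<dots>, x'\<^sub>k\<rangle>\<close> onto one of \<open>\<langle>x\<^sub>1, \<dots>, x\<^sub>k\<rangle>\<close>, so \<open>k \<le> d(\<langle>x'\<^sub>1, \<dots>, x'\<^sub>k\<rangle>) \<le> k\<close>.
  Flexibility of \<open>G\<close> completes the lifts to a generating family of length \<open>d(G)\<close>, whose image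
  generates \<open>H\<close> and has length \<open>d(H)\<close>.\<close>

lemma min_gens_le_card:
  assumes "S \<subseteq> H" "finite S" "generate G S = H"
  shows "min_gens G H \<le> card S"
  unfolding min_gens_def by (rule Least_le) (use assms in blast)

lemma obtain_min_generating_set:
  assumes "S \<subseteq> H" "finite S" "generate G S = H"
  obtains T where "T \<subseteq> H" "finite T" "card T = min_gens G H" "generate G T = H"
proof -
  have "\<exists>T. T \<subseteq> H \<and> finite T \<and> card T = min_gens G H \<and> generate G T = H"
    unfolding min_gens_def by (rule LeastI_ex) (use assms in blast)
  then show ?thesis using that by blast
qed

lemma min_gens_generate_le_card:
  assumes "finite S"
  shows "min_gens G (generate G S) \<le> card S"
  by (rule min_gens_le_card) (use assms in \<open>auto intro: generate.incl\<close>)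

lemma (in group_hom) min_gens_generate_img_le:
  assumes "S \<subseteq> carrier G" "finite S"
  shows "min_gens H (generate H (h ` S)) \<le> min_gens G (generate G S)"
proof -
  obtain T where T: "T \<subseteq> generate G S" "finite T" "card T = min_gens G (generate G S)"
    "generate G T = generate G S"
    using obtain_min_generating_set[of S "generate G S" G] assms(2)
    by (auto intro: generate.incl)
  have T_carrier: "T \<subseteq> carrier G"
    using T(1) G.generate_incl[OF assms(1)] by blast
  have "generate H (h ` T) = generate H (h ` S)"
    using generate_img[OF T_carrier] generate_img[OF assms(1)] T(4) by simp
  then have "min_gens H (generate H (h ` S)) \<le> card (h ` T)"
    using T(2) by (intro min_gens_le_card) (auto intro: generate.incl)
  also have "\<dots> \<le> card T"
    using T(2) by (rule card_image_le)
  finally show ?thesis using T(3) by simp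
qed

lemma epi_lift_family:
  assumes "h \<in> epi G H" "x ` I \<subseteq> carrier H"
  obtains x' where "x' ` I \<subseteq> carrier G" "\<And>i. i \<in> I \<Longrightarrow> h (x' i) = x i"
proof -
  have "\<forall>i\<in>I. \<exists>g\<in>carrier G. h g = x i"
    using assms by (force simp: epi_def)
  then show ?thesis using that by (metis bchoice image_subsetI)
qed

lemma k_flexible_epi:
  assumes "group G" "group H" "h \<in> epi G H"
    and "rank_grp H = rank_grp G"
    and "k_flexible G k"
  shows "k_flexible H k"
  unfolding k_flexible_def
proof (intro allI impI)
  interpret group_hom G H h
    using assms(1-3) by (simp add: group_hom_def group_hom_axioms_def epi_def)
  fix x :: "nat \<Rightarrow> 'c"
  assume x: "x ` {..<k} \<subseteq> carrier H"
    and min_gens_x: "min_gens H (generate H (x ` {..<k})) = k"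
  obtain x' where x': "x' ` {..<k} \<subseteq> carrier G" "\<And>i. i < k \<Longrightarrow> h (x' i) = x i"
    using epi_lift_family[OF assms(3) x] by auto
  have img_x': "h ` x' ` {..<k} = x ` {..<k}"
    using x'(2) by (force simp: image_iff)
  have "min_gens G (generate G (x' ` {..<k})) = k"
  proof (rule antisym)
    show "min_gens G (generate G (x' ` {..<k})) \<le> k"
      using min_gens_generate_le_card[of "x' ` {..<k}" G] card_image_le[of "{..<k}" x'] by simp
    show "k \<le> min_gens G (generate G (x' ` {..<k}))"
      using min_gens_generate_img_le[OF x'(1)] img_x' min_gens_x by simp
  qed
  then obtain y where y: "y ` {k..<rank_grp G} \<subseteq> carrier G"
    "generate G (x' ` {..<k} \<union> y ` {k..<rank_grp G}) = carrier G"
    using assms(5) x'(1) unfolding k_flexible_def by blast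
  have "generate H (h ` (x' ` {..<k} \<union> y ` {k..<rank_grp G})) = carrier H"
    using generate_img[of "x' ` {..<k} \<union> y ` {k..<rank_grp G}"] x'(1) y assms(3)
    by (simp add: epi_def)
  then have "generate H (x ` {..<k} \<union> (h \<circ> y) ` {k..<rank_grp H}) = carrier H"
    using img_x' assms(4) by (simp add: image_Un image_comp)
  moreover have "(h \<circ> y) ` {k..<rank_grp H} \<subseteq> carrier H"
    using y(1) assms(4) by auto
  ultimately show "\<exists>y. y ` {k..<rank_grp H} \<subseteq> carrier H \<and>
      generate H (x ` {..<k} \<union> y ` {k..<rank_grp H}) = carrier H"
    by blast
qed

lemma (in normal) r_coset_epi_Mod: "(\<lambda>a. H #> a) \<in> epi G (G Mod H)"
  using r_coset_hom_Mod by (auto simp: epi_def FactGroup_def RCOSETS_def)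

theorem lemma2p1:
  fixes G :: "('a, 'b) monoid_scheme" and N :: "'a set" and k :: nat
  assumes "group G"
    and "finite (carrier G)"
    and "rank_grp G \<ge> 2"
    and "1 \<le> k" and "k \<le> rank_grp G"
    and "k_flexible G k"
    and "N \<lhd> G"
    and "rank_grp (G Mod N) = rank_grp G"
  shows "k_flexible (G Mod N) k"
  using k_flexible_epi[OF assms(1) normal.factorgroup_is_group normal.r_coset_epi_Mod]
    assms(6-8) by blast

end
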